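(* Let $K$ be a finite field and $|\cdot|:K\to R$ a multiplicative generalized seminorm. Then $|\cdot|$ is multiplicatively equivalent to the trivial seminorm $|\cdot|_0:K\to\{0,1\}$, given by $|0|_0=0$ and $|x|_0=1$ for $x\neq0$.
   Context: A halo is a commutative unital semiring with a partial order compatible with $+$ and $\cdot$; an aura is a halo whose semiring is a semifield; positive means $0<1$. A generalized seminorm on a ring $A$ is a map $|\cdot|:A\to R$ into a positive totally ordered aura with $|0|=0,|1|=1$, $|a+b|\le|a|+|b|$, $|ab|\le|a||b|$; multiplicative if $|ab|=|a||b|$. The target $\{0,1\}$ is the halo with $0<1$, $1+1=1$ and usual multiplication. Two seminorms $|\cdot|_1,|\cdot|_2$ on $A$ are multiplicatively equivalent if for all $a,b,c\in A$: $|a|_1|c|_1\le|b|_1\iff|a|_2|c|_2\le|b|_2$. *)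

theory Defs
  imports Main
begin

definition halo_compat :: "'r::{comm_semiring_1,order} itself \<Rightarrow> bool" where
  "halo_compat _ \<longleftrightarrow> (\<forall>a b c::'r. a \<le> b \<longrightarrow> a + c \<le> b + c \<and> a * c \<le> b * c)"

definition is_semifield :: "'r::comm_semiring_1 itself \<Rightarrow> bool" where
  "is_semifield _ \<longleftrightarrow> (0::'r) \<noteq> 1 \<and> (\<forall>x::'r. x \<noteq> 0 \<longrightarrow> (\<exists>y. x * y = 1))"

definition pos_tot_aura :: "'r::{comm_semiring_1,linorder} itself \<Rightarrow> bool" where
  "pos_tot_aura T \<longleftrightarrow> halo_compat T \<and> is_semifield T \<and> (0::'r) < 1"

definition gen_seminorm :: "('a::ring_1 \<Rightarrow> 'r::{comm_semiring_1,order}) \<Rightarrow> bool" where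
  "gen_seminorm f \<longleftrightarrow> f 0 = 0 \<and> f 1 = 1 \<and>
     (\<forall>a b. f (a + b) \<le> f a + f b) \<and> (\<forall>a b. f (a * b) \<le> f a * f b)"

definition multiplicative :: "('a::ring_1 \<Rightarrow> 'r::comm_semiring_1) \<Rightarrow> bool" where
  "multiplicative f \<longleftrightarrow> (\<forall>a b. f (a * b) = f a * f b)"

definition mult_equiv ::
  "('a \<Rightarrow> 'r::{times,ord}) \<Rightarrow> ('a \<Rightarrow> 's::{times,ord}) \<Rightarrow> bool" where
  "mult_equiv f g \<longleftrightarrow> (\<forall>a b c. f a * f c \<le> f b \<longleftrightarrow> g a * g c \<le> g b)"

datatype bhalo = BZ | BO

instantiation bhalo :: "{comm_semiring_1, linorder}"
begin
definition "zero_bhalo = BZ"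
definition "one_bhalo = BO"
fun plus_bhalo :: "bhalo \<Rightarrow> bhalo \<Rightarrow> bhalo" where
  "plus_bhalo BZ y = y" | "plus_bhalo BO y = BO"
fun times_bhalo :: "bhalo \<Rightarrow> bhalo \<Rightarrow> bhalo" where
  "times_bhalo BZ y = BZ" | "times_bhalo BO y = y"
fun less_eq_bhalo :: "bhalo \<Rightarrow> bhalo \<Rightarrow> bool" where
  "less_eq_bhalo BZ y = True" | "less_eq_bhalo BO y = (y = BO)"
definition less_bhalo :: "bhalo \<Rightarrow> bhalo \<Rightarrow> bool" where
  "less_bhalo x y \<longleftrightarrow> x \<le> y \<and> \<not> y \<le> x"
instance
proof
  fix a b c :: bhalo
  show "a + b + c = a + (b + c)" by (cases a; cases b; cases c) auto
  show "a + b = b + a" by (cases a; cases b) auto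
  show "0 + a = a" by (simp add: zero_bhalo_def)
  show "a * b * c = a * (b * c)" by (cases a; cases b; cases c) auto
  show "a * b = b * a" by (cases a; cases b) auto
  show "1 * a = a" by (simp add: one_bhalo_def)
  show "0 * a = 0" by (simp add: zero_bhalo_def)
  show "a * 0 = 0" by (cases a) (auto simp: zero_bhalo_def)
  show "(a + b) * c = a * c + b * c" by (cases a; cases b; cases c) auto
  show "(0::bhalo) \<noteq> 1" by (simp add: zero_bhalo_def one_bhalo_def)
  show "(a < b) = (a \<le> b \<and> \<not> b \<le> a)" by (simp add: less_bhalo_def)
  show "a \<le> a" by (cases a) auto
  show "a \<le> b \<Longrightarrow> b \<le> c \<Longrightarrow> a \<le> c" by (cases a; cases b; cases c) auto
  show "a \<le> b \<Longrightarrow> b \<le> a \<Longrightarrow> a = b" by (cases a; cases b) auto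
  show "a \<le> b \<or> b \<le> a" by (cases a; cases b) auto
qed
end

definition triv_seminorm :: "'k::zero \<Rightarrow> bhalo" where
  "triv_seminorm x = (if x = 0 then 0 else 1)"

end

theory Submission
  imports Defs
begin

text \<open>Every nonzero element of a finite field is a root of unity, and in a totally ordered
  halo the only root of unity is 1: powers of an element below 1 stay below it, powers of an
  element above 1 stay above it. Hence a multiplicative seminorm takes the value 1 on every
  nonzero element, and comparisons between values of 0 and 1 are decided the same way in
  the target of the seminorm (where 0 is least) as in the two-element halo.\<close>

lemma finite_division_ring_root_of_unity:
  fixes x :: "'k::{division_ring,finite}"
  assumes "x \<noteq> 0"
  obtains n where "n > 0" and "x ^ n = 1"
proof -
  have "\<not> inj (\<lambda>k::nat. x ^ k)"
    using finite_UNIV infinite_UNIV_nat finite_imageD[of "\<lambda>k::nat. x ^ k" UNIV] by auto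
  then obtain i j :: nat where "i < j" and "x ^ i = x ^ j"
    unfolding inj_def by (metis linorder_neqE_nat)
  have "x ^ i * x ^ (j - i) = x ^ j"
    using \<open>i < j\<close> by (simp flip: power_add)
  also have "\<dots> = x ^ i * 1"
    using \<open>x ^ i = x ^ j\<close> by simp
  finally have "x ^ i * x ^ (j - i) = x ^ i * 1" .
  then have "x ^ (j - i) = 1"
    using assms by simp
  then show thesis
    using that[of "j - i"] \<open>i < j\<close> by simp
qed

lemma halo_compat_mult_right_mono:
  fixes a b c :: "'r::{comm_semiring_1,order}"
  assumes "halo_compat TYPE('r)" and "a \<le> b"
  shows "a * c \<le> b * c"
  using assms unfolding halo_compat_def by blast

lemma halo_compat_nonneg:
  fixes c :: "'r::{comm_semiring_1,order}"
  assumes "halo_compat TYPE('r)" and "(0::'r) < 1"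
  shows "0 \<le> c"
  using halo_compat_mult_right_mono[OF assms(1), of 0 1 c] assms(2) by simp

lemma halo_compat_power_le_of_le_one:
  fixes a :: "'r::{comm_semiring_1,order}"
  assumes "halo_compat TYPE('r)" and "a \<le> 1"
  shows "a ^ Suc n \<le> a"
proof (induction n)
  case (Suc n)
  have "a ^ Suc (Suc n) = a * a ^ Suc n" by simp
  also have "\<dots> \<le> 1 * a ^ Suc n"
    using halo_compat_mult_right_mono[OF assms] .
  finally show ?case using Suc.IH by simp
qed simp

lemma halo_compat_power_ge_of_ge_one:
  fixes a :: "'r::{comm_semiring_1,order}"
  assumes "halo_compat TYPE('r)" and "1 \<le> a"
  shows "a \<le> a ^ Suc n"
proof (induction n)
  case (Suc n)
  have "a \<le> 1 * a ^ Suc n" using Suc.IH by simp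
  also have "\<dots> \<le> a * a ^ Suc n"
    using halo_compat_mult_right_mono[OF assms] .
  finally show ?case by simp
qed simp

lemma halo_compat_root_of_unity_eq_one:
  fixes a :: "'r::{comm_semiring_1,linorder}"
  assumes "halo_compat TYPE('r)" and "n > 0" and "a ^ n = 1"
  shows "a = 1"
proof -
  obtain m where "n = Suc m" using \<open>n > 0\<close> gr0_implies_Suc by blast
  with assms(3) have power_eq: "a ^ Suc m = 1" by simp
  show ?thesis
  proof (cases "a \<le> 1")
    case True
    from halo_compat_power_le_of_le_one[OF assms(1) True, of m] have "1 \<le> a"
      unfolding power_eq .
    with True show ?thesis by simp
  next
    case False
    then have "1 \<le> a" by simp
    from halo_compat_power_ge_of_ge_one[OF assms(1) this, of m] have "a \<le> 1"
      unfolding power_eq .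
    with False show ?thesis by simp
  qed
qed

lemma multiplicative_power:
  assumes "multiplicative v" and "v 1 = 1"
  shows "v (x ^ n) = v x ^ n"
  using assms unfolding multiplicative_def by (induction n) simp_all

lemma multiplicative_finite_field_eq_one:
  fixes v :: "'k::{field,finite} \<Rightarrow> 'r::{comm_semiring_1,linorder}"
  assumes "halo_compat TYPE('r)" and "multiplicative v" and "v 1 = 1" and "x \<noteq> 0"
  shows "v x = 1"
proof -
  obtain n where "n > 0" and "x ^ n = 1"
    using finite_division_ring_root_of_unity[OF assms(4)] .
  then have "v x ^ n = 1"
    using multiplicative_power[OF assms(2,3), of x n] assms(3) by simp
  with \<open>n > 0\<close> show ?thesis
    using halo_compat_root_of_unity_eq_one[OF assms(1)] by blast
qed

theorem lemma3p8:
  fixes v :: "'k::{field,finite} \<Rightarrow> 'r::{comm_semiring_1,linorder}"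
  assumes "pos_tot_aura TYPE('r)"
    and "gen_seminorm v"
    and "multiplicative v"
  shows "mult_equiv v (triv_seminorm :: 'k \<Rightarrow> bhalo)"
proof -
  have compat: "halo_compat TYPE('r)" and positive: "(0::'r) < 1"
    using assms(1) unfolding pos_tot_aura_def by auto
  have v0: "v 0 = 0" and v1: "v 1 = 1"
    using assms(2) unfolding gen_seminorm_def by auto
  have "v x = 1" if "x \<noteq> 0" for x
    using multiplicative_finite_field_eq_one[OF compat assms(3) v1 that] .
  moreover have "0 \<le> c" for c :: 'r
    using halo_compat_nonneg[OF compat positive] .
  ultimately show ?thesis
    using positive
    unfolding mult_equiv_def triv_seminorm_def
    by (auto simp: v0 zero_bhalo_def one_bhalo_def)
qed

end
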